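(* The reduced tight span $\mathbf{F}(\mathbb{S}^1)=\{f:[0,\pi]\to\mathbb{R}\ 1\text{-Lipschitz}:0\le f\le\pi,\ f(0)+f(\pi)=\pi\}$ with the sup norm is isometric to $\mathbf{E}(\mathbb{S}^1)$.
   Context: $\mathbb{S}^1=\mathbb{R}/2\pi$ with its geodesic metric. For a metric space $X$, $\Delta(X)=\{f:X\to\mathbb{R}\text{ bounded}:f(x)+f(x')\ge d_X(x,x')\}$ and the tight span $\mathbf{E}(X)$ is the set of pointwise-minimal elements of $\Delta(X)$ with the sup-norm metric. *)

theory Defs
  imports "HOL-Analysis.Analysis" "HOL-Library.FuncSet"
begin

text \<open>A metric space is given by a carrier set S and a distance function d on it.
Real-valued functions on S are represented as extensional functions (value undefined off S).\<close>

definition Delta :: "'a set \<Rightarrow> ('a \<Rightarrow> 'a \<Rightarrow> real) \<Rightarrow> ('a \<Rightarrow> real) set" where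
  "Delta S d = {f \<in> extensional S. (\<exists>B. \<forall>x\<in>S. \<bar>f x\<bar> \<le> B) \<and>
                  (\<forall>x\<in>S. \<forall>y\<in>S. f x + f y \<ge> d x y)}"

definition tight_span :: "'a set \<Rightarrow> ('a \<Rightarrow> 'a \<Rightarrow> real) \<Rightarrow> ('a \<Rightarrow> real) set" where
  "tight_span S d = {f \<in> Delta S d. \<forall>g\<in>Delta S d.
       (\<forall>x\<in>S. g x \<le> f x) \<longrightarrow> (\<forall>x\<in>S. g x = f x)}"

definition sup_dist :: "'a set \<Rightarrow> ('a \<Rightarrow> real) \<Rightarrow> ('a \<Rightarrow> real) \<Rightarrow> real" where
  "sup_dist S f g = (SUP x\<in>S. \<bar>f x - g x\<bar>)"

text \<open>The circle R/2pi, represented by the fundamental domain [0,2pi), with geodesic metric.\<close>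
definition S1 :: "real set" where
  "S1 = {0..<2*pi}"

definition S1_dist :: "real \<Rightarrow> real \<Rightarrow> real" where
  "S1_dist x y = min \<bar>x - y\<bar> (2*pi - \<bar>x - y\<bar>)"

definition reduced_tight_span_S1 :: "(real \<Rightarrow> real) set" where
  "reduced_tight_span_S1 = {f \<in> extensional {0..pi}.
      (\<forall>x\<in>{0..pi}. \<forall>y\<in>{0..pi}. \<bar>f x - f y\<bar> \<le> \<bar>x - y\<bar>) \<and>
      (\<forall>x\<in>{0..pi}. 0 \<le> f x \<and> f x \<le> pi) \<and>
      f 0 + f pi = pi}"

end

theory Submission
  imports Defs
begin

(* In the tight span of any metric space, f x = sup_y (d x y - f y): otherwise f x could be
   lowered without leaving Delta. Hence tight functions are 1-Lipschitz. On the circle every point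
   x has an antipode x' with d x' y = pi - d x y, so for 1-Lipschitz f the supremum equals
   pi - f x', and the tight span consists exactly of the 1-Lipschitz functions with
   f x + f x' = pi. Such a function is determined by its restriction to [0, pi], which lies in
   F(S^1), and |f - g| takes the same values on the two antipodal halves, so restriction is an
   isometry. *)

lemma Delta_fun_upd:
  assumes f: "f \<in> Delta S d" and x0: "x0 \<in> S"
    and sym: "\<And>x y. x \<in> S \<Longrightarrow> y \<in> S \<Longrightarrow> d x y = d y x"
    and c_ge: "\<And>y. y \<in> S \<Longrightarrow> y \<noteq> x0 \<Longrightarrow> d x0 y - f y \<le> c"
    and "d x0 x0 \<le> 2 * c"
  shows "f(x0 := c) \<in> Delta S d"
  unfolding Delta_def
proof (intro CollectI conjI)
  show "f(x0 := c) \<in> extensional S"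
    using f x0 unfolding Delta_def extensional_def by auto
  obtain B where "\<forall>x\<in>S. \<bar>f x\<bar> \<le> B"
    using f unfolding Delta_def by blast
  then show "\<exists>B. \<forall>x\<in>S. \<bar>(f(x0 := c)) x\<bar> \<le> B"
    by (intro exI[of _ "max B \<bar>c\<bar>"]) auto
  show "\<forall>x\<in>S. \<forall>y\<in>S. d x y \<le> (f(x0 := c)) x + (f(x0 := c)) y"
  proof (intro ballI)
    fix x y assume x: "x \<in> S" and y: "y \<in> S"
    have "d x y \<le> f x + f y"
      using f x y unfolding Delta_def by blast
    moreover have "d x0 y \<le> c + f y" if "y \<noteq> x0"
      using c_ge[OF y that] by linarith
    moreover have "d x x0 \<le> f x + c" if "x \<noteq> x0"
      using c_ge[OF x that] sym[OF x x0] by linarith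
    ultimately show "d x y \<le> (f(x0 := c)) x + (f(x0 := c)) y"
      using \<open>d x0 x0 \<le> 2 * c\<close> by (cases "x = x0"; cases "y = x0") simp_all
  qed
qed

lemma tight_span_SUP_eq:
  assumes f: "f \<in> tight_span S d" and x0: "x0 \<in> S"
    and sym: "\<And>x y. x \<in> S \<Longrightarrow> y \<in> S \<Longrightarrow> d x y = d y x"
  shows "f x0 = (SUP y\<in>S. d x0 y - f y)"
proof -
  define s where "s = (SUP y\<in>S. d x0 y - f y)"
  have fD: "f \<in> Delta S d"
    using f unfolding tight_span_def by blast
  have Delta_ineq: "d x0 y - f y \<le> f x0" if "y \<in> S" for y
    using fD x0 that unfolding Delta_def by fastforce
  have s_ge: "d x0 y - f y \<le> s" if "y \<in> S" for y
    unfolding s_def by (rule cSUP_upper[OF that bdd_aboveI2[OF Delta_ineq]])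
  have "s \<le> f x0"
    unfolding s_def using x0 Delta_ineq by (blast intro: cSUP_least)
  moreover have "\<not> s < f x0"
  proof
    assume s_less: "s < f x0"
    define c where "c = max s (d x0 x0 / 2)"
    have "c < f x0"
      using s_less s_ge[OF x0] unfolding c_def by linarith
    moreover have "f(x0 := c) \<in> Delta S d"
      using s_ge by (intro Delta_fun_upd[OF fD x0 sym]) (auto simp: c_def le_max_iff_disj)
    moreover have "\<forall>x\<in>S. (f(x0 := c)) x \<le> f x"
      using \<open>c < f x0\<close> by simp
    ultimately have "(f(x0 := c)) x0 = f x0"
      using f x0 unfolding tight_span_def by blast
    with \<open>c < f x0\<close> show False
      by simp
  qed
  ultimately show ?thesis
    unfolding s_def by linarith
qed

lemma tight_span_lipschitz:
  assumes f: "f \<in> tight_span S d" and x: "x \<in> S" and z: "z \<in> S"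
    and sym: "\<And>x y. x \<in> S \<Longrightarrow> y \<in> S \<Longrightarrow> d x y = d y x"
    and triangle: "\<And>x y z. x \<in> S \<Longrightarrow> y \<in> S \<Longrightarrow> z \<in> S \<Longrightarrow> d x z \<le> d x y + d y z"
  shows "f x - f z \<le> d x z"
proof -
  have "d x y - f y \<le> d x z + f z" if y: "y \<in> S" for y
  proof -
    have "d z y \<le> f z + f y"
      using f z y unfolding tight_span_def Delta_def by blast
    then show ?thesis
      using triangle[OF x z y] by linarith
  qed
  then have "(SUP y\<in>S. d x y - f y) \<le> d x z + f z"
    using x by (blast intro: cSUP_least)
  then show ?thesis
    using tight_span_SUP_eq[OF f x sym] by linarith
qed

lemma tight_spanI:
  assumes f: "f \<in> Delta S d" and tight: "\<forall>x\<in>S. \<exists>y\<in>S. f x + f y = d x y"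
  shows "f \<in> tight_span S d"
  unfolding tight_span_def
proof (intro CollectI conjI ballI impI f)
  fix g x assume g: "g \<in> Delta S d" and le: "\<forall>x\<in>S. g x \<le> f x" and x: "x \<in> S"
  obtain y where y: "y \<in> S" "f x + f y = d x y"
    using tight x by blast
  have "d x y \<le> g x + g y"
    using g x y unfolding Delta_def by blast
  moreover have "g x \<le> f x" "g y \<le> f y"
    using le x y by blast+
  ultimately show "g x = f x"
    using y by linarith
qed

definition S1_antipode :: "real \<Rightarrow> real" where
  "S1_antipode x = (if x < pi then x + pi else x - pi)"

lemma S1_dist_commute: "S1_dist x y = S1_dist y x"
  unfolding S1_dist_def by (simp add: abs_minus_commute)

lemma S1_dist_self [simp]: "S1_dist x x = 0"
  unfolding S1_dist_def by simp

lemma S1_dist_triangle: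
  "x \<in> S1 \<Longrightarrow> y \<in> S1 \<Longrightarrow> z \<in> S1 \<Longrightarrow> S1_dist x z \<le> S1_dist x y + S1_dist y z"
  unfolding S1_dist_def S1_def by (auto simp: abs_if min_def)

lemma S1_dist_half: "x \<in> {0..pi} \<Longrightarrow> y \<in> {0..pi} \<Longrightarrow> S1_dist x y = \<bar>x - y\<bar>"
  unfolding S1_dist_def by (auto simp: abs_if min_def)

lemma half_subset_S1: "{0..pi} \<subseteq> S1"
  unfolding S1_def using pi_gt_zero by (auto simp del: pi_gt_zero)

lemma S1_antipode_in_S1: "x \<in> S1 \<Longrightarrow> S1_antipode x \<in> S1"
  unfolding S1_def S1_antipode_def by auto

lemma S1_dist_antipode:
  "x \<in> S1 \<Longrightarrow> y \<in> S1 \<Longrightarrow> S1_dist (S1_antipode x) y = pi - S1_dist x y"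
  unfolding S1_dist_def S1_def S1_antipode_def by (auto simp: abs_if min_def)

lemma S1_dist_antipode_self: "x \<in> S1 \<Longrightarrow> S1_dist x (S1_antipode x) = pi"
  using S1_dist_antipode[of x x] S1_antipode_in_S1 S1_dist_commute by simp

lemma S1_antipodal_Delta_ineq:
  assumes lip: "\<forall>x\<in>S1. \<forall>y\<in>S1. g x - g y \<le> S1_dist x y"
    and antipodal: "\<forall>x\<in>S1. g x + g (S1_antipode x) = pi"
    and x: "x \<in> S1" and y: "y \<in> S1"
  shows "S1_dist x y \<le> g x + g y"
proof -
  have "g (S1_antipode x) - g y \<le> pi - S1_dist x y"
    using lip S1_antipode_in_S1[OF x] y S1_dist_antipode[OF x y] by metis
  then show ?thesis
    using antipodal x by fastforce
qed

lemma S1_antipodal_bounds: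
  assumes lip: "\<forall>x\<in>S1. \<forall>y\<in>S1. g x - g y \<le> S1_dist x y"
    and antipodal: "\<forall>x\<in>S1. g x + g (S1_antipode x) = pi"
    and x: "x \<in> S1"
  shows "0 \<le> g x" "g x \<le> pi"
  using S1_antipodal_Delta_ineq[OF lip antipodal x x]
    S1_antipodal_Delta_ineq[OF lip antipodal S1_antipode_in_S1[OF x] S1_antipode_in_S1[OF x]]
    antipodal x by fastforce+

lemma tight_span_S1_antipodal:
  assumes g: "g \<in> tight_span S1 S1_dist" and x: "x \<in> S1"
  shows "g x + g (S1_antipode x) = pi"
proof -
  have "S1_dist x y - g y \<le> pi - g (S1_antipode x)" if y: "y \<in> S1" for y
    using tight_span_lipschitz[OF g S1_antipode_in_S1[OF x] y S1_dist_commute S1_dist_triangle]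
      S1_dist_antipode[OF x y] by linarith
  then have "(SUP y\<in>S1. S1_dist x y - g y) \<le> pi - g (S1_antipode x)"
    using x by (blast intro: cSUP_least)
  moreover have "S1_dist x (S1_antipode x) \<le> g x + g (S1_antipode x)"
    using g x S1_antipode_in_S1[OF x] unfolding tight_span_def Delta_def by blast
  ultimately show ?thesis
    using tight_span_SUP_eq[OF g x S1_dist_commute] S1_dist_antipode_self[OF x] by linarith
qed

lemma tight_span_S1_iff:
  "g \<in> tight_span S1 S1_dist \<longleftrightarrow> g \<in> extensional S1 \<and>
     (\<forall>x\<in>S1. \<forall>y\<in>S1. g x - g y \<le> S1_dist x y) \<and>
     (\<forall>x\<in>S1. g x + g (S1_antipode x) = pi)"
proof (intro iffI conjI ballI; (elim conjE)?)
  assume g: "g \<in> tight_span S1 S1_dist"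
  then show "g \<in> extensional S1"
    unfolding tight_span_def Delta_def by blast
  show "g x - g y \<le> S1_dist x y" if "x \<in> S1" "y \<in> S1" for x y
    using tight_span_lipschitz[OF g that S1_dist_commute S1_dist_triangle] .
  show "g x + g (S1_antipode x) = pi" if "x \<in> S1" for x
    using tight_span_S1_antipodal[OF g that] .
next
  assume ext: "g \<in> extensional S1"
    and lip: "\<forall>x\<in>S1. \<forall>y\<in>S1. g x - g y \<le> S1_dist x y"
    and antipodal: "\<forall>x\<in>S1. g x + g (S1_antipode x) = pi"
  note Delta_ineq = S1_antipodal_Delta_ineq[OF lip antipodal]
  have "\<bar>g x\<bar> \<le> pi" if "x \<in> S1" for x
    using S1_antipodal_bounds[OF lip antipodal that] by (simp add: abs_le_iff)
  then have "g \<in> Delta S1 S1_dist"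
    unfolding Delta_def using ext Delta_ineq by blast
  moreover have "\<exists>y\<in>S1. g x + g y = S1_dist x y" if "x \<in> S1" for x
    using antipodal that S1_antipode_in_S1[OF that] S1_dist_antipode_self[OF that] by metis
  ultimately show "g \<in> tight_span S1 S1_dist"
    by (intro tight_spanI) blast+
qed

definition S1_extend :: "(real \<Rightarrow> real) \<Rightarrow> real \<Rightarrow> real" where
  "S1_extend f = restrict (\<lambda>x. if x \<le> pi then f x else pi - f (x - pi)) S1"

lemma S1_extend_lipschitz:
  assumes f: "f \<in> reduced_tight_span_S1" and x: "x \<in> S1" and y: "y \<in> S1"
  shows "S1_extend f x - S1_extend f y \<le> S1_dist x y"
proof -
  have ends: "f 0 + f pi = pi"
    using f unfolding reduced_tight_span_S1_def by blast
  have lip: "\<bar>f a - f b\<bar> \<le> \<bar>a - b\<bar>" if "a \<in> {0..pi}" "b \<in> {0..pi}" for a b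
    using f that unfolding reduced_tight_span_S1_def by blast
  have to_ends: "\<bar>f a - f 0\<bar> \<le> a" "\<bar>f a - f pi\<bar> \<le> pi - a" if "a \<in> {0..pi}" for a
    using lip[OF that, of 0] lip[OF that, of pi] that by auto
  have S1_dist_shift: "S1_dist (a - pi) (b - pi) = S1_dist a b" for a b
    unfolding S1_dist_def by simp
  consider "x \<le> pi" "y \<le> pi" | "x \<le> pi" "pi < y" | "pi < x" "y \<le> pi" | "pi < x" "pi < y"
    by linarith
  then show ?thesis
  proof cases
    case 1
    then have "x \<in> {0..pi}" "y \<in> {0..pi}"
      using x y unfolding S1_def by auto
    moreover have "S1_extend f x - S1_extend f y = f x - f y"
      using 1 x y unfolding S1_extend_def by simp
    ultimately show ?thesis
      using lip S1_dist_half by (metis abs_le_D1)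
  next
    case 2
    then have "x \<in> {0..pi}" "y - pi \<in> {0..pi}"
      using x y unfolding S1_def by auto
    note bounds = to_ends[OF this(1), unfolded abs_le_iff] to_ends[OF this(2), unfolded abs_le_iff]
    have "S1_extend f x - S1_extend f y = f x + f (y - pi) - pi"
      using 2 x y unfolding S1_extend_def by simp
    moreover have "S1_dist x y = min (y - x) (2 * pi - (y - x))"
      using 2 unfolding S1_dist_def by simp
    ultimately show ?thesis
      using bounds ends by simp
  next
    case 3
    then have "x - pi \<in> {0..pi}" "y \<in> {0..pi}"
      using x y unfolding S1_def by auto
    note bounds = to_ends[OF this(1), unfolded abs_le_iff] to_ends[OF this(2), unfolded abs_le_iff]
    have "S1_extend f x - S1_extend f y = pi - f (x - pi) - f y"
      using 3 x y unfolding S1_extend_def by simp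
    moreover have "S1_dist x y = min (x - y) (2 * pi - (x - y))"
      using 3 unfolding S1_dist_def by simp
    ultimately show ?thesis
      using bounds ends by simp
  next
    case 4
    then have "x - pi \<in> {0..pi}" "y - pi \<in> {0..pi}"
      using x y unfolding S1_def by auto
    moreover have "S1_extend f x - S1_extend f y = f (y - pi) - f (x - pi)"
      using 4 x y unfolding S1_extend_def by simp
    ultimately show ?thesis
      using lip S1_dist_half S1_dist_shift S1_dist_commute by (metis abs_le_D1)
  qed
qed

lemma S1_extend_in_tight_span:
  assumes f: "f \<in> reduced_tight_span_S1"
  shows "S1_extend f \<in> tight_span S1 S1_dist"
proof -
  have "f 0 + f pi = pi"
    using f unfolding reduced_tight_span_S1_def by blast
  then have "S1_extend f x + S1_extend f (S1_antipode x) = pi" if "x \<in> S1" for x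
    using that S1_antipode_in_S1[OF that]
    unfolding S1_extend_def S1_antipode_def S1_def by auto
  then show ?thesis
    unfolding tight_span_S1_iff using S1_extend_lipschitz[OF f]
    by (simp add: S1_extend_def)
qed

lemma restrict_tight_span_S1:
  assumes g: "g \<in> tight_span S1 S1_dist"
  shows "restrict g {0..pi} \<in> reduced_tight_span_S1"
proof -
  have lip: "\<forall>x\<in>S1. \<forall>y\<in>S1. g x - g y \<le> S1_dist x y"
    and antipodal: "\<forall>x\<in>S1. g x + g (S1_antipode x) = pi"
    using g unfolding tight_span_S1_iff by blast+
  have "\<bar>g x - g y\<bar> \<le> \<bar>x - y\<bar>" if "x \<in> {0..pi}" "y \<in> {0..pi}" for x y
  proof -
    have x: "x \<in> S1" and y: "y \<in> S1"
      using that half_subset_S1 by auto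
    show ?thesis
      unfolding abs_le_iff minus_diff_eq
      using lip x y S1_dist_half[OF that] S1_dist_commute[of x y] by metis
  qed
  moreover have "0 \<le> g x" "g x \<le> pi" if "x \<in> {0..pi}" for x
    using S1_antipodal_bounds[OF lip antipodal] that half_subset_S1 by blast+
  moreover have "g 0 + g pi = pi"
    using antipodal half_subset_S1 by (force simp: S1_antipode_def)
  ultimately show ?thesis
    unfolding reduced_tight_span_S1_def by auto
qed

lemma restrict_S1_extend:
  "f \<in> reduced_tight_span_S1 \<Longrightarrow> restrict (S1_extend f) {0..pi} = f"
  unfolding reduced_tight_span_S1_def S1_extend_def using half_subset_S1
  by (auto simp: extensional_def fun_eq_iff subset_iff)

lemma S1_extend_restrict:
  assumes g: "g \<in> tight_span S1 S1_dist"
  shows "S1_extend (restrict g {0..pi}) = g"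
proof
  fix x
  note g_props = g[unfolded tight_span_S1_iff]
  show "S1_extend (restrict g {0..pi}) x = g x"
  proof (cases "x \<in> S1")
    case True
    then have "g x + g (S1_antipode x) = pi"
      using g_props by blast
    then show ?thesis
      using True unfolding S1_extend_def S1_antipode_def S1_def by auto
  next
    case False
    then show ?thesis
      using g_props unfolding S1_extend_def extensional_def by auto
  qed
qed

lemma abs_diff_S1_extend_image:
  "(\<lambda>x. \<bar>S1_extend f x - S1_extend g x\<bar>) ` S1 = (\<lambda>x. \<bar>f x - g x\<bar>) ` {0..pi}"
proof (intro equalityI subsetI)
  fix v assume "v \<in> (\<lambda>x. \<bar>S1_extend f x - S1_extend g x\<bar>) ` S1"
  then obtain x where x: "x \<in> S1" and v: "v = \<bar>S1_extend f x - S1_extend g x\<bar>"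
    by blast
  show "v \<in> (\<lambda>x. \<bar>f x - g x\<bar>) ` {0..pi}"
  proof (cases "x \<le> pi")
    case True
    then show ?thesis
      using x v unfolding S1_extend_def S1_def by auto
  next
    case False
    then have "v = \<bar>f (x - pi) - g (x - pi)\<bar>" "x - pi \<in> {0..pi}"
      using x v unfolding S1_extend_def S1_def by auto
    then show ?thesis
      by blast
  qed
next
  fix v assume "v \<in> (\<lambda>x. \<bar>f x - g x\<bar>) ` {0..pi}"
  then show "v \<in> (\<lambda>x. \<bar>S1_extend f x - S1_extend g x\<bar>) ` S1"
    using half_subset_S1 unfolding S1_extend_def by (auto intro!: image_eqI)
qed

theorem proposition3p5:
  shows "\<exists>\<Phi>. bij_betw \<Phi> reduced_tight_span_S1 (tight_span S1 S1_dist) \<and>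
     (\<forall>f\<in>reduced_tight_span_S1. \<forall>g\<in>reduced_tight_span_S1.
        sup_dist S1 (\<Phi> f) (\<Phi> g) = sup_dist {0..pi} f g)"
proof (intro exI[of _ S1_extend] conjI ballI)
  show "bij_betw S1_extend reduced_tight_span_S1 (tight_span S1 S1_dist)"
    by (rule bij_betw_byWitness[where f' = "\<lambda>g. restrict g {0..pi}"])
      (use restrict_S1_extend S1_extend_restrict S1_extend_in_tight_span
        restrict_tight_span_S1 in auto)
  fix f g
  show "sup_dist S1 (S1_extend f) (S1_extend g) = sup_dist {0..pi} f g"
    unfolding sup_dist_def by (simp add: abs_diff_S1_extend_image)
qed

end
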